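(* Let $A\in M_n$ and $c\in\mathbb{R}^n$ with $W(A;c)\ne\emptyset$. Let $\theta\in\mathbb{R}$, $h\in\mathbb{R}$ and let $L=\{v\in\mathbb{C}:\mathrm{Re}(e^{i\theta}v)=h\}$ be a supporting line of $W(A;c)$, i.e. $W(A;c)\subseteq\{v:\mathrm{Re}(e^{i\theta}v)\le h\}$ and $L\cap W(A;c)\neq\emptyset$. Suppose either (a) $W(A;c)$ has nonempty interior and $L$ touches $\partial W(A;c)$ at a point where the boundary curve $\partial W(A;c)$ is differentiable; or (b) $c_1\ge c_2\ge\cdots\ge c_n$. Then $h=\sum_{j=1}^n c_j\lambda_j(H_\theta(A))$.
   Context: $M_n$ denotes the space of $n\times n$ complex matrices. For $A\in M_n$ and $\theta\in\mathbb{R}$, put $H_\theta(A)=\frac{1}{2}(e^{i\theta}A+e^{-i\theta}A^* )$, a Hermitian matrix. For a Hermitian $H\in M_n$, $\lambda_1(H)\ge\lambda_2(H)\ge\cdots\ge\lambda_n(H)$ denote its eigenvalues in nonincreasing order, counted with multiplicity. For $c=(c_1,\dots,c_n)^t\in\mathbb{R}^n$ the weighted numerical range of $A$ is $$W(A;c)=\bigcap_{\theta\in[0,2\pi)}\Big\{v\in\mathbb{C}:\ \mathrm{Re}(e^{i\theta}v)\le \sum_{j=1}^n c_j\lambda_j(H_\theta(A))\Big\}.$$ *)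

theory Defs
  imports "HOL-Analysis.Analysis" "Jordan_Normal_Form.Schur_Decomposition"
begin

definition herm_part :: "real \<Rightarrow> complex mat \<Rightarrow> complex mat" where
  "herm_part \<theta> A = (1/2 :: complex) \<cdot>\<^sub>m
     (exp (\<i> * complex_of_real \<theta>) \<cdot>\<^sub>m A + exp (- (\<i> * complex_of_real \<theta>)) \<cdot>\<^sub>m mat_adjoint A)"

text \<open>Index j (0-based) corresponds to lambda_{j+1}.\<close>
definition herm_eigs :: "complex mat \<Rightarrow> real list" where
  "herm_eigs H = (THE es. length es = dim_row H \<and> sorted_wrt (\<ge>) es \<and>
      char_poly H = (\<Prod>e \<leftarrow> es. [:- complex_of_real e, 1:]))"

text \<open>Weighted numerical range W(A;c) of an n x n matrix; c is indexed 0..n-1.\<close>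
definition wnr :: "complex mat \<Rightarrow> (nat \<Rightarrow> real) \<Rightarrow> complex set" where
  "wnr A c = (\<Inter>\<theta>\<in>{0..<2*pi}. {v. Re (exp (\<i> * complex_of_real \<theta>) * v)
      \<le> (\<Sum>j<dim_row A. c j * herm_eigs (herm_part \<theta> A) ! j)})"

definition boundary_differentiable_at :: "complex set \<Rightarrow> complex \<Rightarrow> bool" where
  "boundary_differentiable_at S p \<longleftrightarrow>
     (\<exists>\<gamma> :: real \<Rightarrow> complex. \<exists>e U d. 0 < e \<and> open U \<and> p \<in> U \<and>
        continuous_on {-e<..<e} \<gamma> \<and> inj_on \<gamma> {-e<..<e} \<and>
        \<gamma> ` {-e<..<e} = frontier S \<inter> U \<and> \<gamma> 0 = p \<and>
        (\<gamma> has_vector_derivative d) (at 0) \<and> d \<noteq> 0)"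

end

theory Submission
  imports Defs "HOL-Combinatorics.Permutations"
begin

text \<open>
  The function F(phi) = sum_j c_j lambda_j(H_phi(A)) bounds Re(e^(i phi) v) on W(A;c) for every
  phi, so h <= F(theta) as soon as the line L meets W(A;c); the point is the reverse inequality.

  If c is nonincreasing, take an orthonormal eigenbasis u_j of H_theta(A) and
  w = sum_j c_j <u_j, A u_j>. For every phi, Re(e^(i phi) w) = sum_j c_j <u_j, H_phi(A) u_j>,
  which the Ky Fan maximum principle and Abel summation bound by F(phi); hence w lies in W(A;c)
  and Re(e^(i theta) w) = F(theta) <= h.

  In the smooth case, F is continuous (the Ky Fan partial sums are Lipschitz in e^(i phi)), so by
  compactness of [0, 2 pi] a boundary point p of W(A;c) lies on some line
  Re(e^(i phi) v) = F(phi). Both e^(i phi) and e^(i theta) are then normal to the tangent of the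
  boundary curve at p, so e^(i phi) = +-e^(i theta). The sign + gives h = F(phi) = F(theta); the
  sign - squeezes W(A;c) into L, contradicting the nonempty interior.
\<close>

section \<open>Orthonormal families in \<open>\<complex>\<^sup>n\<close>\<close>

text \<open>Vectors of \<open>\<complex>\<^sup>n\<close> are functions \<open>nat \<Rightarrow> complex\<close>, of which only the values below n matter;
  a family of m vectors is a function \<open>nat \<Rightarrow> nat \<Rightarrow> complex\<close>.\<close>

definition cinner :: "nat \<Rightarrow> (nat \<Rightarrow> complex) \<Rightarrow> (nat \<Rightarrow> complex) \<Rightarrow> complex" where
  "cinner n x y = (\<Sum>i<n. cnj (x i) * y i)"

definition orthonormal :: "nat \<Rightarrow> nat \<Rightarrow> (nat \<Rightarrow> nat \<Rightarrow> complex) \<Rightarrow> bool" where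
  "orthonormal n m u \<longleftrightarrow> (\<forall>i<m. \<forall>j<m. cinner n (u i) (u j) = (if i = j then 1 else 0))"

lemma cnj_cinner: "cnj (cinner n x y) = cinner n y x"
  unfolding cinner_def by (simp add: mult.commute)

lemma cinner_self: "cinner n x x = of_real (\<Sum>i<n. (cmod (x i))\<^sup>2)"
  unfolding cinner_def of_real_sum by (intro sum.cong refl) (metis complex_norm_square mult.commute)

lemma Re_cinner_self: "Re (cinner n x x) = (\<Sum>i<n. (cmod (x i))\<^sup>2)"
  by (simp add: cinner_self)

lemma cinner_self_eq_zeroD: "cinner n x x = 0 \<Longrightarrow> j < n \<Longrightarrow> x j = 0"
  using Re_cinner_self[of n x] sum_nonneg_eq_0_iff[of "{..<n}" "\<lambda>i. (cmod (x i))\<^sup>2"] by auto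

lemma cinner_cong:
  "(\<And>j. j < n \<Longrightarrow> x j = x' j) \<Longrightarrow> (\<And>j. j < n \<Longrightarrow> y j = y' j) \<Longrightarrow> cinner n x y = cinner n x' y'"
  unfolding cinner_def by (intro sum.cong) auto

lemma cinner_sum_right:
  "finite S \<Longrightarrow> cinner n x (\<lambda>i. \<Sum>l\<in>S. a l * y l i) = (\<Sum>l\<in>S. a l * cinner n x (y l))"
  unfolding cinner_def
  by (simp add: sum_distrib_left sum_distrib_right mult.assoc mult.left_commute sum.swap[of _ S])

lemma cinner_scale_left: "cinner n (\<lambda>i. a * x i) y = cnj a * cinner n x y"
  unfolding cinner_def by (simp add: sum_distrib_left mult.assoc)

lemma cinner_scale_right: "cinner n x (\<lambda>i. a * y i) = a * cinner n x y"
  unfolding cinner_def by (simp add: sum_distrib_left mult.assoc mult.left_commute)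

lemma cinner_diff_right: "cinner n x (\<lambda>j. f j - g j) = cinner n x f - cinner n x g"
  unfolding cinner_def by (simp add: algebra_simps sum_subtractf)

lemma cinner_delta_right: "k < n \<Longrightarrow> cinner n x (\<lambda>j. if j = k then 1 else 0) = cnj (x k)"
  unfolding cinner_def by (simp add: if_distrib cong: if_cong)

lemma cinner_normalize:
  assumes "cinner n x x \<noteq> 0"
  defines "s \<equiv> 1 / complex_of_real (sqrt (Re (cinner n x x)))"
  shows "cinner n (\<lambda>j. s * x j) (\<lambda>j. s * x j) = 1"
proof -
  define r where "r = Re (cinner n x x)"
  have x: "cinner n x x = of_real r"
    unfolding r_def using cinner_self[of n x] by simp
  with assms(1) Re_cinner_self[of n x] have "r > 0"
    unfolding r_def by (metis less_eq_real_def of_real_0 sum_nonneg zero_le_power2)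
  then show ?thesis
    unfolding cinner_scale_left cinner_scale_right s_def r_def[symmetric] x
    by (simp flip: of_real_mult)
qed

lemma orthonormal_unitary:
  assumes o: "orthonormal n n w"
  defines "U \<equiv> mat n n (\<lambda>(i,l). w l i)" and "U' \<equiv> mat n n (\<lambda>(l,i). cnj (w l i))"
  shows "U' * U = 1\<^sub>m n" and "U * U' = 1\<^sub>m n"
proof -
  have U: "U \<in> carrier_mat n n" and U': "U' \<in> carrier_mat n n" unfolding U_def U'_def by auto
  show UU': "U' * U = 1\<^sub>m n"
  proof (rule eq_matI)
    fix a b assume a: "a < dim_row (1\<^sub>m n :: complex mat)" and b: "b < dim_col (1\<^sub>m n :: complex mat)"
    have "(U' * U) $$ (a,b) = cinner n (w a) (w b)"
      using a b unfolding U_def U'_def cinner_def by (simp add: scalar_prod_def lessThan_atLeast0)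
    also have "\<dots> = 1\<^sub>m n $$ (a,b)" using o a b unfolding orthonormal_def by auto
    finally show "(U' * U) $$ (a,b) = 1\<^sub>m n $$ (a,b)" .
  qed (use U U' in auto)
  then show "U * U' = 1\<^sub>m n" by (rule mat_mult_left_right_inverse[OF U' U])
qed

lemma orthonormal_columns:
  assumes o: "orthonormal n n w" and i: "i < n" and k: "k < n"
  shows "(\<Sum>l<n. w l i * cnj (w l k)) = (if i = k then 1 else 0)"
  using orthonormal_unitary(2)[OF o, THEN arg_cong[where f="\<lambda>M. M $$ (i,k)"]] i k
  by (simp add: scalar_prod_def lessThan_atLeast0)

lemma orthonormal_expansion:
  assumes o: "orthonormal n n w" and i: "i < n"
  shows "(\<Sum>l<n. cinner n (w l) y * w l i) = y i"
proof -
  have "(\<Sum>l<n. cinner n (w l) y * w l i) = (\<Sum>l<n. \<Sum>k<n. y k * (w l i * cnj (w l k)))"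
    unfolding cinner_def by (simp add: sum_distrib_right sum_distrib_left mult_ac)
  also have "\<dots> = (\<Sum>k<n. y k * (\<Sum>l<n. w l i * cnj (w l k)))"
    by (subst sum.swap) (simp add: sum_distrib_left)
  also have "\<dots> = y i"
    using i by (simp add: orthonormal_columns[OF o i] if_distrib cong: if_cong)
  finally show ?thesis .
qed

lemma sum_swap3:
  "(\<Sum>l\<in>A. \<Sum>k\<in>B. \<Sum>i\<in>C. F l k i) = (\<Sum>k\<in>B. \<Sum>i\<in>C. \<Sum>l\<in>A. F l k i)"
  by (subst sum.swap) (simp add: sum.swap[of _ A])

lemma parseval:
  assumes o: "orthonormal n n w"
  shows "(\<Sum>l<n. (cmod (cinner n (w l) y))\<^sup>2) = Re (cinner n y y)"
proof -
  have "complex_of_real (\<Sum>l<n. (cmod (cinner n (w l) y))\<^sup>2)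
      = (\<Sum>l<n. cnj (cinner n (w l) y) * cinner n (w l) y)"
    unfolding of_real_sum complex_norm_square by (simp add: mult.commute)
  also have "\<dots> = (\<Sum>l<n. \<Sum>k<n. \<Sum>i<n. (w l k * cnj (y k)) * (cnj (w l i) * y i))"
    unfolding cinner_def by (simp add: sum_product)
  also have "\<dots> = (\<Sum>k<n. \<Sum>i<n. cnj (y k) * y i * (\<Sum>l<n. w l k * cnj (w l i)))"
    by (subst sum_swap3) (simp add: mult_ac sum_distrib_left)
  also have "\<dots> = cinner n y y"
    unfolding cinner_def by (simp add: orthonormal_columns[OF o] if_distrib cong: if_cong)
  finally show ?thesis by (metis Re_complex_of_real)
qed

lemma orthonormal_snoc:
  assumes o: "orthonormal n m u" and w: "cinner n w w = 1" "\<forall>i<m. cinner n (u i) w = 0"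
  shows "orthonormal n (Suc m) (u(m := w))"
  unfolding orthonormal_def
proof (intro allI impI)
  fix i j assume i: "i < Suc m" and j: "j < Suc m"
  show "cinner n ((u(m := w)) i) ((u(m := w)) j) = (if i = j then 1 else 0)"
    using o w i j cnj_cinner[of n "u j" w] unfolding orthonormal_def
    by (cases "i = m"; cases "j = m") auto
qed

text \<open>Gram-Schmidt step: project the standard basis onto the orthogonal complement of u; if every
  projection vanished, comparing traces would give n = m.\<close>

lemma exists_unit_orthogonal:
  assumes o: "orthonormal n m u" and mn: "m < n"
  shows "\<exists>w. cinner n w w = 1 \<and> (\<forall>i<m. cinner n (u i) w = 0)"
proof -
  define x where "x k = (\<lambda>j. (if j = k then 1 else 0) - (\<Sum>i<m. cnj (u i k) * u i j))" for k
  have orth: "cinner n (u i') (x k) = 0" if "i' < m" "k < n" for i' k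
  proof -
    have "cinner n (u i') (x k) = cnj (u i' k) - (\<Sum>i<m. cnj (u i k) * cinner n (u i') (u i))"
      unfolding x_def cinner_diff_right cinner_delta_right[OF that(2)] by (simp add: cinner_sum_right)
    also have "\<dots> = cnj (u i' k) - (\<Sum>i<m. cnj (u i k) * (if i' = i then 1 else 0))"
      using o that(1) unfolding orthonormal_def by (intro arg_cong2[where f=minus] refl sum.cong) auto
    also have "\<dots> = 0" using that(1) by (simp add: if_distrib cong: if_cong)
    finally show ?thesis .
  qed
  show ?thesis
  proof (cases "\<exists>k<n. cinner n (x k) (x k) \<noteq> 0")
    case True
    then obtain k where k: "k < n" "cinner n (x k) (x k) \<noteq> 0" by auto
    define s where "s = 1 / complex_of_real (sqrt (Re (cinner n (x k) (x k))))"
    have "cinner n (\<lambda>j. s * x k j) (\<lambda>j. s * x k j) = 1"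
      unfolding s_def by (rule cinner_normalize[OF k(2)])
    moreover have "cinner n (u i) (\<lambda>j. s * x k j) = 0" if "i < m" for i
      unfolding cinner_scale_right orth[OF that k(1)] by simp
    ultimately show ?thesis by blast
  next
    case False
    then have z: "x k k = 0" if "k < n" for k using cinner_self_eq_zeroD that by blast
    have "(\<Sum>k<n. (1::complex)) = (\<Sum>k<n. \<Sum>i<m. cnj (u i k) * u i k)"
      using z unfolding x_def by (intro sum.cong) auto
    also have "\<dots> = (\<Sum>i<m. cinner n (u i) (u i))" unfolding cinner_def by (rule sum.swap)
    also have "\<dots> = (\<Sum>i<m. (1::complex))" using o unfolding orthonormal_def by simp
    finally show ?thesis using mn by simp
  qed
qed

lemma orthonormal_extend:
  assumes "orthonormal n m u" "m \<le> n"
  shows "\<exists>w. orthonormal n n w \<and> (\<forall>i<m. w i = u i)"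
  using assms
proof (induction "n - m" arbitrary: m u)
  case 0
  then show ?case by (metis diff_is_0_eq le_antisym)
next
  case (Suc d)
  then have mn: "m < n" by simp
  obtain w where w: "cinner n w w = 1" "\<forall>i<m. cinner n (u i) w = 0"
    using exists_unit_orthogonal[OF Suc.prems(1) mn] by blast
  have "d = n - Suc m" using Suc.hyps(2) by arith
  then obtain w' where "orthonormal n n w'" "\<forall>i<Suc m. w' i = (u(m := w)) i"
    using Suc.hyps(1) orthonormal_snoc[OF Suc.prems(1) w] mn by (metis Suc_leI)
  then show ?case by (metis fun_upd_other less_SucI less_irrefl)
qed

section \<open>The spectral theorem for Hermitian matrices\<close>

definition matvec :: "nat \<Rightarrow> complex mat \<Rightarrow> (nat \<Rightarrow> complex) \<Rightarrow> nat \<Rightarrow> complex" where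
  "matvec n H x i = (\<Sum>k<n. H $$ (i,k) * x k)"

definition hermitian :: "nat \<Rightarrow> complex mat \<Rightarrow> bool" where
  "hermitian n H \<longleftrightarrow> (\<forall>i<n. \<forall>k<n. H $$ (k,i) = cnj (H $$ (i,k)))"

lemma matvec_sum:
  "finite S \<Longrightarrow> matvec n H (\<lambda>j. \<Sum>b\<in>S. a b * y b j) i = (\<Sum>b\<in>S. a b * matvec n H (y b) i)"
  unfolding matvec_def by (simp add: sum_distrib_left mult_ac sum.swap[of _ S])

lemma matvec_scale: "matvec n H (\<lambda>j. a * x j) i = a * matvec n H x i"
  unfolding matvec_def by (simp add: sum_distrib_left mult_ac)

lemma cinner_matvec_hermitian:
  assumes "hermitian n H"
  shows "cinner n x (matvec n H y) = cinner n (matvec n H x) y"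
proof -
  have "cinner n x (matvec n H y) = (\<Sum>k<n. \<Sum>i<n. cnj (x i) * H $$ (i,k) * y k)"
    unfolding cinner_def matvec_def by (subst sum.swap) (simp add: sum_distrib_left mult.assoc)
  also have "\<dots> = (\<Sum>k<n. \<Sum>i<n. cnj (H $$ (k,i)) * cnj (x i) * y k)"
    using assms unfolding hermitian_def by (intro sum.cong refl) (metis complex_cnj_cnj lessThan_iff mult.commute)
  also have "\<dots> = cinner n (matvec n H x) y"
    unfolding cinner_def matvec_def by (simp add: sum_distrib_right)
  finally show ?thesis .
qed

lemma cinner_eigvec_matvec_eq_0:
  assumes "hermitian n H" and ev: "\<forall>i<n. matvec n H x i = e * x i" and "cinner n x y = 0"
  shows "cinner n x (matvec n H y) = 0"
proof -
  have "cinner n x (matvec n H y) = cinner n (\<lambda>i. e * x i) y"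
    unfolding cinner_matvec_hermitian[OF assms(1)] using ev by (intro cinner_cong) auto
  then show ?thesis using assms(3) by (simp add: cinner_scale_left)
qed

lemma eigval_hermitian_real:
  assumes "hermitian n H" and ev: "\<forall>i<n. matvec n H x i = e * x i" and x: "cinner n x x = 1"
  shows "e = of_real (Re e)"
proof -
  have "cinner n x (matvec n H x) = e"
    using ev x by (subst cinner_cong[of n x x _ "\<lambda>i. e * x i"]) (auto simp: cinner_scale_right)
  moreover have "cinner n x (matvec n H x) = cnj e"
    unfolding cinner_matvec_hermitian[OF assms(1)] using ev x
    by (subst cinner_cong[of n _ "\<lambda>i. e * x i" x]) (auto simp: cinner_scale_left)
  ultimately show ?thesis by (simp add: complex_eq_iff)
qed

lemma sum_lessThan_split_shift:
  assumes "m \<le> (n::nat)"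
  shows "(\<Sum>a<n. f a) = (\<Sum>a<m. f a) + (\<Sum>a<n-m. f (m+a))"
proof -
  have "(\<Sum>a<n. f a) = (\<Sum>a<m. f a) + (\<Sum>a\<in>{m..<n}. f a)"
    using assms by (metis atLeast0LessThan le0 sum.atLeastLessThan_concat)
  also have "(\<Sum>a\<in>{m..<n}. f a) = (\<Sum>a<n-m. f (m+a))"
    by (rule sum.reindex_bij_witness[of _ "\<lambda>a. m + a" "\<lambda>a. a - m"]) (use assms in auto)
  finally show ?thesis .
qed

lemma hermitian_matvec_complement_expansion:
  assumes herm: "hermitian n H" and w: "orthonormal n n w"
    and ev: "\<forall>a<m. \<forall>i<n. matvec n H (w a) i = \<mu> a * w a i" and "m \<le> b" "b < n" and i: "i < n"
  shows "matvec n H (w b) i = (\<Sum>a<n-m. cinner n (w (m+a)) (matvec n H (w b)) * w (m+a) i)"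
proof -
  let ?c = "\<lambda>a. cinner n (w a) (matvec n H (w b))"
  have "?c a = 0" if "a < m" for a
  proof (rule cinner_eigvec_matvec_eq_0[OF herm])
    show "\<forall>i<n. matvec n H (w a) i = \<mu> a * w a i" using ev that by simp
    show "cinner n (w a) (w b) = 0" using w that assms(4,5) unfolding orthonormal_def by simp
  qed
  then have "(\<Sum>a<m. ?c a * w a i) = 0" by simp
  moreover have "matvec n H (w b) i = (\<Sum>a<n. ?c a * w a i)"
    using orthonormal_expansion[OF w i] by simp
  ultimately show ?thesis
    using sum_lessThan_split_shift[of m n "\<lambda>a. ?c a * w a i"] assms(4,5) by simp
qed

text \<open>Extend the eigenvectors u to an orthonormal basis w; since H maps the span of the remaining
  basis vectors into itself, an eigenvector of the compression K of H to that span yields a new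
  eigenvector of H orthogonal to u.\<close>

lemma hermitian_exists_eigvec_orthogonal:
  assumes herm: "hermitian n H"
    and o: "orthonormal n m u" and ev: "\<forall>l<m. \<forall>i<n. matvec n H (u l) i = \<mu> l * u l i" and mn: "m < n"
  shows "\<exists>y e. cinner n y y \<noteq> 0 \<and> (\<forall>i<m. cinner n (u i) y = 0) \<and> (\<forall>i<n. matvec n H y i = e * y i)"
proof -
  obtain w where w: "orthonormal n n w" "\<forall>i<m. w i = u i" using orthonormal_extend[OF o] mn by fastforce
  define r where "r = n - m"
  define K where "K = mat r r (\<lambda>(a,b). cinner n (w (m+a)) (matvec n H (w (m+b))))"
  have K: "K \<in> carrier_mat r r" unfolding K_def by simp
  obtain es where es: "char_poly K = (\<Prod>a\<leftarrow>es. [:- a, 1:])" "length es = r"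
    using char_poly_factorized[OF K] by blast
  then obtain e es' where "es = e # es'" using mn r_def by (cases es) auto
  then have "poly (char_poly K) e = 0" unfolding es(1) by simp
  then have "eigenvalue K e" using eigenvalue_root_char_poly[OF K] by simp
  then obtain z where z: "z \<in> carrier_vec r" "z \<noteq> 0\<^sub>v r" "K *\<^sub>v z = e \<cdot>\<^sub>v z"
    unfolding eigenvalue_def eigenvector_def using K by auto
  define y where "y = (\<lambda>j. \<Sum>b<r. z $ b * w (m+b) j)"
  have w_y: "cinner n (w a) y = (if m \<le> a then z $ (a - m) else 0)" if "a < n" for a
  proof -
    have "cinner n (w a) y = (\<Sum>b<r. z $ b * (if a = m + b then 1 else 0))"
      unfolding y_def cinner_sum_right[OF finite_lessThan]
      using w(1) that unfolding orthonormal_def r_def by (intro sum.cong refl) auto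
    also have "\<dots> = (if m \<le> a then z $ (a - m) else 0)"
    proof (cases "m \<le> a")
      case True
      then have "\<And>b. (a = m + b) = (b = a - m)" "a - m < r" using that unfolding r_def by auto
      then show ?thesis using True by (simp add: if_distrib cong: if_cong)
    qed simp
    finally show ?thesis .
  qed
  have "\<forall>a<m. \<forall>i<n. matvec n H (w a) i = \<mu> a * w a i" using ev w(2) by simp
  then have Hw: "matvec n H (w (m+b)) i = (\<Sum>a<r. K $$ (a,b) * w (m+a) i)" if "b < r" "i < n" for b i
    using hermitian_matvec_complement_expansion[OF herm w(1), of m \<mu> "m+b" i] that
    unfolding K_def r_def by simp
  have Kz: "(\<Sum>b<r. K $$ (a,b) * z $ b) = e * z $ a" if "a < r" for a
  proof -
    have "(K *\<^sub>v z) $ a = (\<Sum>b<r. K $$ (a,b) * z $ b)"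
      using K z(1) that by (simp add: scalar_prod_def lessThan_atLeast0)
    then show ?thesis using z(3) z(1) that by simp
  qed
  have "matvec n H y i = e * y i" if i: "i < n" for i
  proof -
    have "matvec n H y i = (\<Sum>b<r. \<Sum>a<r. z $ b * K $$ (a,b) * w (m+a) i)"
      unfolding y_def matvec_sum[OF finite_lessThan] using Hw i by (simp add: sum_distrib_left mult.assoc)
    also have "\<dots> = (\<Sum>a<r. (\<Sum>b<r. K $$ (a,b) * z $ b) * w (m+a) i)"
      unfolding sum_distrib_right by (subst sum.swap) (simp add: mult_ac)
    also have "\<dots> = e * y i" unfolding y_def using Kz by (simp add: sum_distrib_left mult.assoc)
    finally show ?thesis .
  qed
  moreover have "cinner n y y \<noteq> 0"
  proof
    assume "cinner n y y = 0"
    then have "y j = 0" if "j < n" for j using cinner_self_eq_zeroD that by blast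
    then have "cinner n (w (m+b)) y = 0" for b unfolding cinner_def by simp
    then have "z $ b = 0" if "b < r" for b using w_y[of "m+b"] that unfolding r_def by simp
    then have "z = 0\<^sub>v r" using z(1) by (intro eq_vecI) auto
    then show False using z(2) by simp
  qed
  moreover have "cinner n (u i) y = 0" if "i < m" for i using w_y[of i] w(2) that mn by simp
  ultimately show ?thesis by blast
qed

lemma hermitian_orthonormal_eigvecs:
  assumes herm: "hermitian n H" and "m \<le> n"
  shows "\<exists>u \<mu>. orthonormal n m u \<and> (\<forall>l<m. \<forall>i<n. matvec n H (u l) i = of_real (\<mu> l) * u l i)"
  using \<open>m \<le> n\<close>
proof (induction m)
  case 0 then show ?case unfolding orthonormal_def by auto
next
  case (Suc m)
  then obtain u \<mu> where o: "orthonormal n m u"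
    and ev: "\<forall>l<m. \<forall>i<n. matvec n H (u l) i = of_real (\<mu> l) * u l i" by auto
  obtain y e where y: "cinner n y y \<noteq> 0" "\<forall>i<m. cinner n (u i) y = 0" "\<forall>i<n. matvec n H y i = e * y i"
    using hermitian_exists_eigvec_orthogonal[OF herm o, of "\<lambda>l. of_real (\<mu> l)"] ev Suc.prems
    by (meson Suc_le_lessD)
  define s where "s = 1 / complex_of_real (sqrt (Re (cinner n y y)))"
  define y' where "y' = (\<lambda>j. s * y j)"
  have y'1: "cinner n y' y' = 1" using cinner_normalize[OF y(1)] unfolding y'_def s_def .
  have y'o: "\<forall>i<m. cinner n (u i) y' = 0" using y(2) unfolding y'_def by (simp add: cinner_scale_right)
  have y'e: "\<forall>i<n. matvec n H y' i = e * y' i" using y(3) unfolding y'_def by (simp add: matvec_scale)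
  have "orthonormal n (Suc m) (u(m := y'))" by (rule orthonormal_snoc[OF o y'1 y'o])
  moreover have "\<forall>l<Suc m. \<forall>i<n. matvec n H ((u(m := y')) l) i = of_real ((\<mu>(m := Re e)) l) * (u(m := y')) l i"
  proof (intro allI impI)
    fix l i assume l: "l < Suc m" and i: "i < n"
    show "matvec n H ((u(m := y')) l) i = of_real ((\<mu>(m := Re e)) l) * (u(m := y')) l i"
    proof (cases "l = m")
      case True
      then show ?thesis using y'e i eigval_hermitian_real[OF herm y'e y'1] by (metis fun_upd_same)
    qed (use ev l i in simp)
  qed
  ultimately show ?case by blast
qed

definition sorted_eigenbasis :: "nat \<Rightarrow> complex mat \<Rightarrow> (nat \<Rightarrow> nat \<Rightarrow> complex) \<Rightarrow> (nat \<Rightarrow> real) \<Rightarrow> bool" where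
  "sorted_eigenbasis n H u \<mu> \<longleftrightarrow> orthonormal n n u
     \<and> (\<forall>l<n. \<forall>i<n. matvec n H (u l) i = of_real (\<mu> l) * u l i)
     \<and> (\<forall>i j. i \<le> j \<and> j < n \<longrightarrow> \<mu> j \<le> \<mu> i)"

lemma sorted_eigenbasis_exists:
  assumes herm: "hermitian n H"
  shows "\<exists>u \<mu>. sorted_eigenbasis n H u \<mu>"
proof -
  obtain u \<mu> where o: "orthonormal n n u" and ev: "\<forall>l<n. \<forall>i<n. matvec n H (u l) i = of_real (\<mu> l) * u l i"
    using hermitian_orthonormal_eigvecs[OF herm, of n] by auto
  define xs where "xs = map \<mu> [0..<n]"
  define ys where "ys = rev (sort xs)"
  have "mset ys = mset xs" unfolding ys_def by simp
  then obtain p where p: "p permutes {..<length xs}" "permute_list p xs = ys"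
    by (metis mset_eq_permutation)
  have lx: "length xs = n" unfolding xs_def by simp
  have pin: "p i < n" if "i < n" for i using permutes_in_image[OF p(1)] that lx by simp
  have pinj: "p i = p j \<longleftrightarrow> i = j" for i j using permutes_inj[OF p(1)] by (meson injD)
  have ysn: "ys ! i = \<mu> (p i)" if "i < n" for i
    using permute_list_nth[OF p(1)] p(2) that lx pin unfolding xs_def by auto
  have "sorted_wrt (\<ge>) ys" unfolding ys_def by (simp add: sorted_wrt_rev)
  then have "\<mu> (p j) \<le> \<mu> (p i)" if "i \<le> j" "j < n" for i j
    using that ysn lx unfolding ys_def by (cases "i = j") (auto simp: sorted_wrt_iff_nth_less)
  then have "sorted_eigenbasis n H (\<lambda>l. u (p l)) (\<lambda>l. \<mu> (p l))"
    using o ev pin pinj unfolding sorted_eigenbasis_def orthonormal_def by auto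
  then show ?thesis by blast
qed

lemma sorted_eigenbasis_expansion:
  assumes sp: "sorted_eigenbasis n H u \<mu>" and i: "i < n" and k: "k < n"
  shows "H $$ (i,k) = (\<Sum>l<n. of_real (\<mu> l) * u l i * cnj (u l k))"
proof -
  have o: "orthonormal n n u" and ev: "\<forall>l<n. \<forall>i<n. matvec n H (u l) i = of_real (\<mu> l) * u l i"
    using sp unfolding sorted_eigenbasis_def by auto
  have "H $$ (i,k) = (\<Sum>j<n. H $$ (i,j) * (if j = k then 1 else 0))"
    using k by (simp add: if_distrib cong: if_cong)
  also have "\<dots> = (\<Sum>j<n. H $$ (i,j) * (\<Sum>l<n. u l j * cnj (u l k)))"
    using orthonormal_columns[OF o _ k] by simp
  also have "\<dots> = (\<Sum>j<n. \<Sum>l<n. H $$ (i,j) * u l j * cnj (u l k))"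
    by (simp add: sum_distrib_left mult.assoc)
  also have "\<dots> = (\<Sum>l<n. matvec n H (u l) i * cnj (u l k))"
    unfolding matvec_def by (subst sum.swap) (simp add: sum_distrib_right)
  also have "\<dots> = (\<Sum>l<n. of_real (\<mu> l) * u l i * cnj (u l k))" using ev i by simp
  finally show ?thesis .
qed

lemma mat_mult_index_square:
  "A \<in> carrier_mat n n \<Longrightarrow> B \<in> carrier_mat n n \<Longrightarrow> i < n \<Longrightarrow> k < n \<Longrightarrow>
   (A * B) $$ (i,k) = (\<Sum>j<n. A $$ (i,j) * B $$ (j,k))"
  by (simp add: scalar_prod_def lessThan_atLeast0)

lemma sorted_eigenbasis_char_poly:
  assumes H: "H \<in> carrier_mat n n" and sp: "sorted_eigenbasis n H u \<mu>"
  shows "char_poly H = (\<Prod>e\<leftarrow>map \<mu> [0..<n]. [:- complex_of_real e, 1:])"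
proof -
  have o: "orthonormal n n u" using sp unfolding sorted_eigenbasis_def by auto
  define P where "P = mat n n (\<lambda>(i,l). u l i)"
  define Q where "Q = mat n n (\<lambda>(l,i). cnj (u l i))"
  define D where "D = mat n n (\<lambda>(i,j). if i = j then complex_of_real (\<mu> i) else 0)"
  have P: "P \<in> carrier_mat n n" and Q: "Q \<in> carrier_mat n n" and D: "D \<in> carrier_mat n n"
    unfolding P_def Q_def D_def by auto
  have PQ: "Q * P = 1\<^sub>m n" "P * Q = 1\<^sub>m n"
    using orthonormal_unitary[OF o] unfolding P_def Q_def by auto
  have PD: "(P * D) $$ (i,l) = u l i * complex_of_real (\<mu> l)" if "i < n" "l < n" for i l
    using that P D unfolding mat_mult_index_square[OF P D that]
    by (simp add: P_def D_def if_distrib cong: if_cong)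
  have "H = P * D * Q"
  proof (rule eq_matI)
    fix i k assume "i < dim_row (P * D * Q)" "k < dim_col (P * D * Q)"
    then have ik: "i < n" "k < n" using P Q D by auto
    have "(P * D * Q) $$ (i,k) = (\<Sum>l<n. u l i * complex_of_real (\<mu> l) * cnj (u l k))"
      unfolding mat_mult_index_square[OF mult_carrier_mat[OF P D] Q ik] using PD ik Q_def by simp
    then show "H $$ (i,k) = (P * D * Q) $$ (i,k)"
      using sorted_eigenbasis_expansion[OF sp ik] by (simp add: mult_ac)
  qed (use H P Q D in auto)
  then have "similar_mat_wit H D P Q"
    unfolding similar_mat_wit_def Let_def using H P Q D PQ by auto
  then have "char_poly H = char_poly D" by (intro char_poly_similar) (auto simp: similar_mat_def)
  also have "\<dots> = (\<Prod>a\<leftarrow>diag_mat D. [:- a, 1:])"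
    by (rule char_poly_upper_triangular[OF D]) (simp add: upper_triangular_def D_def)
  also have "diag_mat D = map (\<lambda>i. complex_of_real (\<mu> i)) [0..<n]"
    unfolding diag_mat_def D_def by simp
  finally show ?thesis by (simp add: o_def)
qed

lemma poly_prod_linear_eq_0_iff:
  "poly (\<Prod>e\<leftarrow>xs. [:- complex_of_real e, 1:]) z = 0 \<longleftrightarrow> z \<in> complex_of_real ` set xs"
  by (induction xs) auto

lemma prod_linear_factors_inj:
  "sorted_wrt (\<ge>) xs \<Longrightarrow> sorted_wrt (\<ge>) ys \<Longrightarrow>
   (\<Prod>e\<leftarrow>xs. [:- complex_of_real e, 1:]) = (\<Prod>e\<leftarrow>ys. [:- complex_of_real e, 1:]) \<Longrightarrow> xs = ys"
proof (induction xs arbitrary: ys)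
  case Nil
  show ?case
  proof (cases ys)
    case (Cons y ys')
    have "poly (\<Prod>e\<leftarrow>ys. [:- complex_of_real e, 1:]) (of_real y) = 0"
      unfolding poly_prod_linear_eq_0_iff using Cons by simp
    then show ?thesis using Nil.prems(3) by simp
  qed simp
next
  case (Cons x xs)
  have "poly (\<Prod>e\<leftarrow>ys. [:- complex_of_real e, 1:]) (of_real x) = 0"
    unfolding Cons.prems(3)[symmetric] poly_prod_linear_eq_0_iff by simp
  then have x: "x \<in> set ys" unfolding poly_prod_linear_eq_0_iff by auto
  then obtain y ys' where ys: "ys = y # ys'" by (cases ys) auto
  have "poly (\<Prod>e\<leftarrow>x#xs. [:- complex_of_real e, 1:]) (of_real y) = 0"
    unfolding Cons.prems(3) poly_prod_linear_eq_0_iff ys by simp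
  then have "y \<in> set (x#xs)" unfolding poly_prod_linear_eq_0_iff by auto
  then have xy: "x = y" using x Cons.prems(1,2) unfolding ys by force
  have "[:- complex_of_real y, 1:] * (\<Prod>e\<leftarrow>xs. [:- complex_of_real e, 1:])
      = [:- complex_of_real y, 1:] * (\<Prod>e\<leftarrow>ys'. [:- complex_of_real e, 1:])"
    using Cons.prems(3) unfolding ys xy by (simp only: list.map prod_list.Cons)
  then have "(\<Prod>e\<leftarrow>xs. [:- complex_of_real e, 1:]) = (\<Prod>e\<leftarrow>ys'. [:- complex_of_real e, 1:])"
    using mult_left_cancel[of "[:- complex_of_real y, 1:]"] by simp
  then show ?case using Cons.IH Cons.prems(1,2) ys xy by simp
qed

lemma herm_eigs_sorted_eigenbasis:
  assumes H: "H \<in> carrier_mat n n" and sp: "sorted_eigenbasis n H u \<mu>" and j: "j < n"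
  shows "herm_eigs H ! j = \<mu> j"
proof -
  have s: "sorted_wrt (\<ge>) (map \<mu> [0..<n])"
    using sp unfolding sorted_eigenbasis_def by (auto simp: sorted_wrt_iff_nth_less)
  have "herm_eigs H = map \<mu> [0..<n]"
    unfolding herm_eigs_def
  proof (rule the_equality)
    fix es assume "length es = dim_row H \<and> sorted_wrt (\<ge>) es
      \<and> char_poly H = (\<Prod>e\<leftarrow>es. [:- complex_of_real e, 1:])"
    then show "es = map \<mu> [0..<n]"
      using prod_linear_factors_inj[OF _ s] sorted_eigenbasis_char_poly[OF H sp] by auto
  qed (use H s sorted_eigenbasis_char_poly[OF H sp] in simp)
  then show ?thesis using j by simp
qed

section \<open>The Ky Fan maximum principle\<close>

definition qform :: "nat \<Rightarrow> complex mat \<Rightarrow> (nat \<Rightarrow> complex) \<Rightarrow> complex" where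
  "qform n H x = cinner n x (matvec n H x)"

lemma qform_expand: "qform n H x = (\<Sum>i<n. \<Sum>k<n. cnj (x i) * H $$ (i,k) * x k)"
  unfolding qform_def cinner_def matvec_def by (simp add: sum_distrib_left mult.assoc)

lemma qform_sorted_eigenbasis:
  assumes sp: "sorted_eigenbasis n H u \<mu>"
  shows "qform n H x = complex_of_real (\<Sum>l<n. \<mu> l * (cmod (cinner n (u l) x))\<^sup>2)"
proof -
  have "qform n H x = (\<Sum>i<n. \<Sum>k<n. \<Sum>l<n. of_real (\<mu> l) * ((cnj (x i) * u l i) * (cnj (u l k) * x k)))"
  proof (unfold qform_expand, intro sum.cong refl)
    fix i k assume "i \<in> {..<n}" "k \<in> {..<n}"
    then have "cnj (x i) * H $$ (i,k) * x k
        = (\<Sum>l<n. cnj (x i) * (of_real (\<mu> l) * u l i * cnj (u l k)) * x k)"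
      by (simp only: sorted_eigenbasis_expansion[OF sp] lessThan_iff sum_distrib_left sum_distrib_right)
    then show "cnj (x i) * H $$ (i,k) * x k
        = (\<Sum>l<n. of_real (\<mu> l) * ((cnj (x i) * u l i) * (cnj (u l k) * x k)))"
      by (simp only: mult_ac)
  qed
  also have "\<dots> = (\<Sum>l<n. of_real (\<mu> l) * (cnj (cinner n (u l) x) * cinner n (u l) x))"
  proof (subst sum_swap3[symmetric], intro sum.cong refl)
    fix l
    have a: "cnj (\<Sum>k<n. cnj (u l k) * x k) = (\<Sum>i<n. cnj (x i) * u l i)"
      by (simp add: mult.commute)
    show "(\<Sum>i<n. \<Sum>k<n. of_real (\<mu> l) * ((cnj (x i) * u l i) * (cnj (u l k) * x k)))
        = of_real (\<mu> l) * (cnj (cinner n (u l) x) * cinner n (u l) x)"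
      unfolding cinner_def a unfolding sum_product unfolding sum_distrib_left ..
  qed
  also have "\<dots> = complex_of_real (\<Sum>l<n. \<mu> l * (cmod (cinner n (u l) x))\<^sup>2)"
    unfolding of_real_sum of_real_mult complex_norm_square by (simp add: mult.commute)
  finally show ?thesis .
qed

lemma qform_sorted_eigenbasis_vector:
  assumes sp: "sorted_eigenbasis n H u \<mu>" and j: "j < n"
  shows "Re (qform n H (u j)) = \<mu> j"
proof -
  have "Re (qform n H (u j)) = (\<Sum>l<n. \<mu> l * (if l = j then 1 else 0))"
    unfolding qform_sorted_eigenbasis[OF sp] Re_complex_of_real
    using sp j unfolding sorted_eigenbasis_def orthonormal_def by (intro sum.cong refl) auto
  also have "\<dots> = \<mu> j" using j by (simp add: if_distrib cong: if_cong)
  finally show ?thesis .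
qed

lemma sum_lessThan_if_less:
  assumes "k \<le> (n::nat)"
  shows "(\<Sum>l<n. if l < k then f l else 0) = (\<Sum>l<k. f l)"
proof -
  have "(\<Sum>l<n. if l < k then f l else 0) = (\<Sum>l\<in>{..<n} \<inter> {l. l < k}. f l)"
    by (simp add: sum.inter_restrict)
  also have "{..<n} \<inter> {l. l < k} = {..<k}" using assms by auto
  finally show ?thesis .
qed

lemma weighted_sum_le_initial_sum:
  fixes t \<mu> :: "nat \<Rightarrow> real"
  assumes t: "\<forall>l<n. 0 \<le> t l \<and> t l \<le> 1" and st: "(\<Sum>l<n. t l) = real k" and kn: "k \<le> n"
    and mono: "\<forall>i j. i \<le> j \<and> j < n \<longrightarrow> \<mu> j \<le> \<mu> i"
  shows "(\<Sum>l<n. t l * \<mu> l) \<le> (\<Sum>l<k. \<mu> l)"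
proof (cases "n = 0")
  case True then show ?thesis using kn by simp
next
  case False
  define m where "m = \<mu> (min k (n - 1))"
  have "(t l - (if l < k then 1 else 0)) * \<mu> l \<le> (t l - (if l < k then 1 else 0)) * m" if "l < n" for l
  proof (cases "l < k")
    case True
    then have "l \<le> min k (n - 1)" "min k (n - 1) < n" using kn that \<open>n \<noteq> 0\<close> by auto
    then have "m \<le> \<mu> l" using mono unfolding m_def by blast
    then show ?thesis using True t that by (simp add: mult_left_mono_neg)
  next
    case False
    then have "\<mu> l \<le> m" using mono that unfolding m_def by auto
    then show ?thesis using False t that by (simp add: mult_left_mono)
  qed
  then have "(\<Sum>l<n. (t l - (if l < k then 1 else 0)) * \<mu> l) \<le> (\<Sum>l<n. (t l - (if l < k then 1 else 0)) * m)"
    by (intro sum_mono) auto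
  also have "\<dots> = ((\<Sum>l<n. t l) - (\<Sum>l<n. if l < k then 1 else 0)) * m"
    by (simp add: sum_distrib_right sum_subtractf left_diff_distrib)
  also have "\<dots> = 0" using st sum_lessThan_if_less[OF kn, of "\<lambda>_. 1::real"] by simp
  finally have "(\<Sum>l<n. (t l - (if l < k then 1 else 0)) * \<mu> l) \<le> 0" .
  moreover have "(\<Sum>l<n. (t l - (if l < k then 1 else 0)) * \<mu> l)
      = (\<Sum>l<n. t l * \<mu> l) - (\<Sum>l<n. if l < k then \<mu> l else 0)"
    unfolding sum_subtractf[symmetric] by (intro sum.cong refl) (simp add: algebra_simps)
  ultimately show ?thesis using sum_lessThan_if_less[OF kn, of \<mu>] by simp
qed

lemma ky_fan_weights:
  assumes sp: "sorted_eigenbasis n H u \<mu>" and v: "orthonormal n n v" and kn: "k \<le> n"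
  defines "t \<equiv> \<lambda>l. \<Sum>j<k. (cmod (cinner n (u l) (v j)))\<^sup>2"
  shows "(\<Sum>j<k. Re (qform n H (v j))) = (\<Sum>l<n. t l * \<mu> l)"
    and "\<forall>l<n. 0 \<le> t l \<and> t l \<le> 1"
    and "(\<Sum>l<n. t l) = real k"
proof -
  have u: "orthonormal n n u" using sp unfolding sorted_eigenbasis_def by auto
  show "(\<Sum>j<k. Re (qform n H (v j))) = (\<Sum>l<n. t l * \<mu> l)"
    unfolding qform_sorted_eigenbasis[OF sp] t_def Re_complex_of_real
    by (subst sum.swap) (simp add: sum_distrib_left sum_distrib_right mult.commute)
  show "\<forall>l<n. 0 \<le> t l \<and> t l \<le> 1"
  proof (intro allI impI conjI)
    fix l assume l: "l < n"
    show "0 \<le> t l" unfolding t_def by (simp add: sum_nonneg)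
    have "t l \<le> (\<Sum>j<n. (cmod (cinner n (u l) (v j)))\<^sup>2)"
      unfolding t_def by (rule sum_mono2) (use kn in auto)
    also have "\<dots> = (\<Sum>j<n. (cmod (cinner n (v j) (u l)))\<^sup>2)"
      by (intro sum.cong refl) (metis complex_mod_cnj cnj_cinner)
    also have "\<dots> = 1" using parseval[OF v] u l unfolding orthonormal_def by simp
    finally show "t l \<le> 1" .
  qed
  have "(\<Sum>l<n. t l) = (\<Sum>j<k. Re (cinner n (v j) (v j)))"
    unfolding t_def by (subst sum.swap) (simp add: parseval[OF u])
  also have "\<dots> = real k" using v kn unfolding orthonormal_def by simp
  finally show "(\<Sum>l<n. t l) = real k" .
qed

lemma ky_fan_partial_sum:
  assumes sp: "sorted_eigenbasis n H u \<mu>" and v: "orthonormal n n v" and kn: "k \<le> n"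
  shows "(\<Sum>j<k. Re (qform n H (v j))) \<le> (\<Sum>j<k. \<mu> j)"
  unfolding ky_fan_weights(1)[OF assms]
  by (rule weighted_sum_le_initial_sum[OF ky_fan_weights(2,3)[OF assms] kn])
     (use sp in \<open>simp add: sorted_eigenbasis_def\<close>)

lemma ky_fan_trace:
  assumes sp: "sorted_eigenbasis n H u \<mu>" and v: "orthonormal n n v"
  shows "(\<Sum>j<n. Re (qform n H (v j))) = (\<Sum>j<n. \<mu> j)"
proof -
  define t where "t l = (\<Sum>j<n. (cmod (cinner n (u l) (v j)))\<^sup>2)" for l
  note w = ky_fan_weights[OF sp v order.refl, folded t_def]
  have "(\<Sum>l<n. 1 - t l) = 0" using w(3) by (simp add: sum_subtractf)
  then have "\<forall>l\<in>{..<n}. 1 - t l = 0" using w(2) by (subst sum_nonneg_eq_0_iff[symmetric]) auto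
  then show ?thesis unfolding w(1) by simp
qed

lemma abel_summation_le:
  fixes a b c :: "nat \<Rightarrow> real"
  assumes mono: "\<forall>i j. i \<le> j \<and> j < n \<longrightarrow> c j \<le> c i"
    and part: "\<forall>k\<le>n. (\<Sum>j<k. a j) \<le> (\<Sum>j<k. b j)" and tot: "(\<Sum>j<n. a j) = (\<Sum>j<n. b j)"
  shows "(\<Sum>j<n. c j * a j) \<le> (\<Sum>j<n. c j * b j)"
proof (cases n)
  case 0 then show ?thesis by simp
next
  case (Suc N)
  define d where "d j = a j - b j" for j
  have P: "(\<Sum>j<k. d j) \<le> 0" if "k \<le> n" for k using part that unfolding d_def by (simp add: sum_subtractf)
  have "(\<Sum>j<Suc M. c j * d j) \<le> c M * (\<Sum>j<Suc M. d j)" if "Suc M \<le> n" for M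
    using that
  proof (induction M)
    case (Suc M)
    have "(c M - c (Suc M)) * (\<Sum>j<Suc M. d j) \<le> 0"
      using mono Suc.prems P[of "Suc M"] by (intro mult_nonneg_nonpos) auto
    then show ?case using Suc by (simp add: algebra_simps)
  qed simp
  also have "(\<Sum>j<Suc N. d j) = 0" using tot Suc unfolding d_def by (simp add: sum_subtractf)
  finally show ?thesis using Suc unfolding d_def by (simp add: right_diff_distrib sum_subtractf)
qed

section \<open>The support function of the weighted numerical range\<close>

abbreviation expi :: "real \<Rightarrow> complex" where
  "expi \<theta> \<equiv> exp (\<i> * complex_of_real \<theta>)"

lemma norm_expi [simp]: "cmod (expi \<theta>) = 1"
  by (simp add: norm_exp_eq_Re)

lemma expi_mod_2pi: "\<exists>\<phi>'. 0 \<le> \<phi>' \<and> \<phi>' < 2 * pi \<and> expi \<phi>' = expi \<phi>"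
proof -
  define k where "k = \<lfloor>\<phi> / (2 * pi)\<rfloor>"
  define \<phi>' where "\<phi>' = \<phi> - 2 * pi * of_int k"
  have "of_int k \<le> \<phi> / (2 * pi)" "\<phi> / (2 * pi) < of_int k + 1" unfolding k_def by linarith+
  then have "0 \<le> \<phi>'" "\<phi>' < 2 * pi" unfolding \<phi>'_def by (simp_all add: field_simps)
  moreover have "expi \<phi>' = expi \<phi> / exp ((2 * complex_of_int k * pi) * \<i>)"
    unfolding \<phi>'_def by (simp add: exp_diff algebra_simps)
  moreover have "exp ((2 * complex_of_int k * pi) * \<i>) = 1"
    using exp_integer_2pi[of "real_of_int k"] by simp
  ultimately show ?thesis by auto
qed

lemma herm_part_carrier: "A \<in> carrier_mat n n \<Longrightarrow> herm_part \<theta> A \<in> carrier_mat n n"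
  unfolding herm_part_def mat_adjoint_def by auto

lemma herm_part_index:
  assumes A: "A \<in> carrier_mat n n" and i: "i < n" and k: "k < n"
  shows "herm_part \<theta> A $$ (i,k) = (1/2) * (expi \<theta> * A $$ (i,k) + cnj (expi \<theta>) * cnj (A $$ (k,i)))"
  using A i k unfolding herm_part_def mat_adjoint_def by (simp add: mat_of_rows_index exp_cnj)

lemma herm_part_cong: "expi \<phi> = expi \<psi> \<Longrightarrow> herm_part \<phi> A = herm_part \<psi> A"
  unfolding herm_part_def by (simp add: exp_minus)

lemma hermitian_herm_part: "A \<in> carrier_mat n n \<Longrightarrow> hermitian n (herm_part \<theta> A)"
  unfolding hermitian_def by (simp add: herm_part_index algebra_simps)

lemma qform_herm_part:
  assumes A: "A \<in> carrier_mat n n"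
  shows "qform n (herm_part \<theta> A) x = complex_of_real (Re (expi \<theta> * qform n A x))"
proof -
  define S where "S = (\<Sum>i<n. \<Sum>k<n. cnj (x i) * A $$ (i,k) * x k)"
  define S' where "S' = (\<Sum>i<n. \<Sum>k<n. cnj (x i) * cnj (A $$ (k,i)) * x k)"
  have "cnj S = S'" unfolding S_def S'_def by (subst sum.swap) (simp add: mult_ac)
  have "qform n (herm_part \<theta> A) x = (\<Sum>i<n. \<Sum>k<n. (1/2) * (expi \<theta> * (cnj (x i) * A $$ (i,k) * x k)
      + cnj (expi \<theta>) * (cnj (x i) * cnj (A $$ (k,i)) * x k)))"
    unfolding qform_expand by (intro sum.cong refl) (simp add: herm_part_index[OF A] algebra_simps)
  also have "\<dots> = (1/2) * (expi \<theta> * S + cnj (expi \<theta>) * S')"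
    unfolding S_def S'_def by (simp add: sum.distrib sum_distrib_left distrib_left)
  also have "\<dots> = (1/2) * (expi \<theta> * S + cnj (expi \<theta> * S))"
    unfolding \<open>cnj S = S'\<close>[symmetric] by simp
  also have "\<dots> = complex_of_real (Re (expi \<theta> * S))" by (subst complex_add_cnj) simp
  finally show ?thesis unfolding S_def qform_expand .
qed

lemma herm_part_sorted_eigenbasis:
  assumes A: "A \<in> carrier_mat n n"
  obtains u \<mu> where "sorted_eigenbasis n (herm_part \<theta> A) u \<mu>" "\<forall>j<n. herm_eigs (herm_part \<theta> A) ! j = \<mu> j"
  using sorted_eigenbasis_exists[OF hermitian_herm_part[OF A]]
    herm_eigs_sorted_eigenbasis[OF herm_part_carrier[OF A]] by metis

definition wnr_support :: "nat \<Rightarrow> complex mat \<Rightarrow> (nat \<Rightarrow> real) \<Rightarrow> real \<Rightarrow> real" where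
  "wnr_support n A c \<phi> = (\<Sum>j<n. c j * herm_eigs (herm_part \<phi> A) ! j)"

lemma wnr_le_support:
  assumes A: "A \<in> carrier_mat n n" and v: "v \<in> wnr A c"
  shows "Re (expi \<phi> * v) \<le> wnr_support n A c \<phi>"
proof -
  obtain \<phi>' where \<phi>': "0 \<le> \<phi>'" "\<phi>' < 2 * pi" "expi \<phi>' = expi \<phi>" using expi_mod_2pi by blast
  have "Re (expi \<phi>' * v) \<le> wnr_support n A c \<phi>'"
    using v \<phi>'(1,2) A unfolding wnr_def wnr_support_def by auto
  moreover have "wnr_support n A c \<phi>' = wnr_support n A c \<phi>"
    unfolding wnr_support_def herm_part_cong[OF \<phi>'(3)] ..
  ultimately show ?thesis using \<phi>'(3) by simp
qed

lemma wnr_memI: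
  assumes "A \<in> carrier_mat n n"
    and "\<And>\<phi>. 0 \<le> \<phi> \<Longrightarrow> \<phi> < 2 * pi \<Longrightarrow> Re (expi \<phi> * v) \<le> wnr_support n A c \<phi>"
  shows "v \<in> wnr A c"
  using assms unfolding wnr_def wnr_support_def by auto

lemma closed_wnr: "closed (wnr A c)"
  unfolding wnr_def by (intro closed_INT ballI closed_Collect_le continuous_intros)

lemma weighted_qform_le_wnr_support:
  assumes A: "A \<in> carrier_mat n n" and v: "orthonormal n n v"
    and mono: "\<forall>i j. i \<le> j \<and> j < n \<longrightarrow> c j \<le> c i"
  shows "(\<Sum>j<n. c j * Re (expi \<phi> * qform n A (v j))) \<le> wnr_support n A c \<phi>"
proof -
  obtain u \<mu> where sp: "sorted_eigenbasis n (herm_part \<phi> A) u \<mu>"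
    and ev: "\<forall>j<n. herm_eigs (herm_part \<phi> A) ! j = \<mu> j"
    using herm_part_sorted_eigenbasis[OF A] by metis
  have "(\<Sum>j<n. c j * Re (qform n (herm_part \<phi> A) (v j))) \<le> (\<Sum>j<n. c j * \<mu> j)"
    by (rule abel_summation_le[OF mono]) (use ky_fan_partial_sum[OF sp v] ky_fan_trace[OF sp v] in auto)
  then show ?thesis unfolding wnr_support_def using ev by (simp add: qform_herm_part[OF A])
qed

lemma norm_qform_le:
  assumes x: "cinner n x x = 1"
  shows "cmod (qform n A x) \<le> (\<Sum>i<n. \<Sum>k<n. cmod (A $$ (i,k)))"
proof -
  have xi: "cmod (x i) \<le> 1" if "i < n" for i
  proof -
    have "(cmod (x i))\<^sup>2 \<le> (\<Sum>j<n. (cmod (x j))\<^sup>2)" by (rule member_le_sum) (use that in auto)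
    also have "\<dots> = 1" using Re_cinner_self[of n x] x by simp
    finally show ?thesis by (simp add: power_le_one_iff)
  qed
  have "cmod (qform n A x) \<le> (\<Sum>i<n. \<Sum>k<n. cmod (cnj (x i) * A $$ (i,k) * x k))"
    unfolding qform_expand by (rule order.trans[OF norm_sum sum_mono[OF norm_sum]])
  also have "\<dots> \<le> (\<Sum>i<n. \<Sum>k<n. cmod (A $$ (i,k)))"
  proof (intro sum_mono)
    fix i k assume "i \<in> {..<n}" "k \<in> {..<n}"
    then have "cmod (x i) * cmod (x k) \<le> 1" using xi by (intro mult_le_one) auto
    then show "cmod (cnj (x i) * A $$ (i,k) * x k) \<le> cmod (A $$ (i,k))"
      using mult_left_le[of "cmod (x i) * cmod (x k)" "cmod (A $$ (i,k))"] by (simp add: norm_mult mult_ac)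
  qed
  finally show ?thesis .
qed

definition eig_top_sum :: "complex mat \<Rightarrow> nat \<Rightarrow> real \<Rightarrow> real" where
  "eig_top_sum A k \<phi> = (\<Sum>j<k. herm_eigs (herm_part \<phi> A) ! j)"

text \<open>Evaluate the Rayleigh quotients of the eigenbasis of H_psi against H_phi and apply Ky Fan.\<close>

lemma eig_top_sum_diff_le:
  assumes A: "A \<in> carrier_mat n n" and kn: "k \<le> n"
  shows "eig_top_sum A k \<psi> - eig_top_sum A k \<phi>
    \<le> real k * (\<Sum>i<n. \<Sum>l<n. cmod (A $$ (i,l))) * cmod (expi \<psi> - expi \<phi>)"
proof -
  define M where "M = (\<Sum>i<n. \<Sum>l<n. cmod (A $$ (i,l)))"
  obtain u \<mu> where sp: "sorted_eigenbasis n (herm_part \<psi> A) u \<mu>"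
    and ev: "\<forall>j<n. herm_eigs (herm_part \<psi> A) ! j = \<mu> j"
    using herm_part_sorted_eigenbasis[OF A] by metis
  obtain u' \<mu>' where sp': "sorted_eigenbasis n (herm_part \<phi> A) u' \<mu>'"
    and ev': "\<forall>j<n. herm_eigs (herm_part \<phi> A) ! j = \<mu>' j"
    using herm_part_sorted_eigenbasis[OF A] by metis
  have o: "orthonormal n n u" using sp unfolding sorted_eigenbasis_def by auto
  have "eig_top_sum A k \<psi> = (\<Sum>j<k. Re (expi \<psi> * qform n A (u j)))"
  proof (unfold eig_top_sum_def, intro sum.cong refl)
    fix j assume "j \<in> {..<k}"
    then have "j < n" using kn by simp
    then show "herm_eigs (herm_part \<psi> A) ! j = Re (expi \<psi> * qform n A (u j))"
      using ev qform_sorted_eigenbasis_vector[OF sp \<open>j < n\<close>] unfolding qform_herm_part[OF A] by simp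
  qed
  moreover have "(\<Sum>j<k. Re (expi \<phi> * qform n A (u j))) \<le> eig_top_sum A k \<phi>"
  proof -
    have "(\<Sum>j<k. Re (expi \<phi> * qform n A (u j))) = (\<Sum>j<k. Re (qform n (herm_part \<phi> A) (u j)))"
      unfolding qform_herm_part[OF A] by simp
    also have "\<dots> \<le> (\<Sum>j<k. \<mu>' j)" by (rule ky_fan_partial_sum[OF sp' o kn])
    also have "\<dots> = eig_top_sum A k \<phi>" unfolding eig_top_sum_def using ev' kn by simp
    finally show ?thesis .
  qed
  moreover have "Re (expi \<psi> * qform n A (u j)) - Re (expi \<phi> * qform n A (u j)) \<le> M * cmod (expi \<psi> - expi \<phi>)"
    if "j < k" for j
  proof -
    have "cinner n (u j) (u j) = 1" using o kn that unfolding orthonormal_def by simp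
    then have "cmod (qform n A (u j)) \<le> M" unfolding M_def by (rule norm_qform_le)
    then have "cmod (expi \<psi> - expi \<phi>) * cmod (qform n A (u j)) \<le> cmod (expi \<psi> - expi \<phi>) * M"
      by (rule mult_left_mono) simp
    moreover have "Re ((expi \<psi> - expi \<phi>) * qform n A (u j)) \<le> cmod (expi \<psi> - expi \<phi>) * cmod (qform n A (u j))"
      using complex_Re_le_cmod norm_mult by metis
    moreover have "Re ((expi \<psi> - expi \<phi>) * qform n A (u j))
        = Re (expi \<psi> * qform n A (u j)) - Re (expi \<phi> * qform n A (u j))"
      by (simp add: left_diff_distrib)
    ultimately show ?thesis by (simp add: mult.commute)
  qed
  then have "(\<Sum>j<k. Re (expi \<psi> * qform n A (u j))) - (\<Sum>j<k. Re (expi \<phi> * qform n A (u j)))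
      \<le> (\<Sum>j<k. M * cmod (expi \<psi> - expi \<phi>))"
    unfolding sum_subtractf[symmetric] by (intro sum_mono) auto
  ultimately show ?thesis unfolding M_def by simp
qed

lemma isCont_eig_top_sum:
  assumes A: "A \<in> carrier_mat n n" and kn: "k \<le> n"
  shows "isCont (eig_top_sum A k) \<phi>"
proof -
  define K where "K = real k * (\<Sum>i<n. \<Sum>l<n. cmod (A $$ (i,l)))"
  have bound: "\<bar>eig_top_sum A k \<psi> - eig_top_sum A k \<phi>\<bar> \<le> K * cmod (expi \<psi> - expi \<phi>)" for \<psi>
    using eig_top_sum_diff_le[OF A kn, of \<psi> \<phi>] eig_top_sum_diff_le[OF A kn, of \<phi> \<psi>]
      norm_minus_commute[of "expi \<psi>" "expi \<phi>"]
    unfolding K_def by (simp add: abs_le_iff)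
  have "((\<lambda>\<psi>. K * cmod (expi \<psi> - expi \<phi>)) \<longlongrightarrow> K * cmod (expi \<phi> - expi \<phi>)) (at \<phi>)"
    by (intro tendsto_intros)
  then have "((\<lambda>\<psi>. K * cmod (expi \<psi> - expi \<phi>)) \<longlongrightarrow> 0) (at \<phi>)" by simp
  then have "((\<lambda>\<psi>. eig_top_sum A k \<psi> - eig_top_sum A k \<phi>) \<longlongrightarrow> 0) (at \<phi>)"
    by (rule Lim_null_comparison[rotated]) (simp add: bound)
  then show ?thesis unfolding isCont_def by (rule LIM_zero_cancel)
qed

lemma isCont_wnr_support:
  assumes A: "A \<in> carrier_mat n n"
  shows "isCont (wnr_support n A c) \<phi>"
proof -
  have "wnr_support n A c = (\<lambda>\<phi>. \<Sum>j<n. c j * (eig_top_sum A (Suc j) \<phi> - eig_top_sum A j \<phi>))"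
    unfolding wnr_support_def eig_top_sum_def by simp
  moreover have "isCont (\<lambda>\<phi>. \<Sum>j<n. c j * (eig_top_sum A (Suc j) \<phi> - eig_top_sum A j \<phi>)) \<phi>"
    by (intro isCont_sum ballI isCont_mult isCont_diff continuous_const isCont_eig_top_sum[OF A]) auto
  ultimately show ?thesis by simp
qed

section \<open>Support lines of the weighted numerical range\<close>

lemma wnr_support_attained:
  assumes A: "A \<in> carrier_mat n n" and mono: "\<forall>i j. i \<le> j \<and> j < n \<longrightarrow> c j \<le> c i"
  shows "\<exists>w\<in>wnr A c. Re (expi \<theta> * w) = wnr_support n A c \<theta>"
proof -
  obtain u \<mu> where sp: "sorted_eigenbasis n (herm_part \<theta> A) u \<mu>"
    and ev: "\<forall>j<n. herm_eigs (herm_part \<theta> A) ! j = \<mu> j"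
    using herm_part_sorted_eigenbasis[OF A] by metis
  define w where "w = (\<Sum>j<n. complex_of_real (c j) * qform n A (u j))"
  have Re_w: "Re (expi \<phi> * w) = (\<Sum>j<n. c j * Re (expi \<phi> * qform n A (u j)))" for \<phi>
    unfolding w_def by (simp add: sum_distrib_left mult.left_commute Re_sum)
  have u: "orthonormal n n u" using sp unfolding sorted_eigenbasis_def by simp
  have "w \<in> wnr A c"
    by (rule wnr_memI[OF A]) (unfold Re_w, rule weighted_qform_le_wnr_support[OF A u mono])
  moreover have "Re (expi \<theta> * qform n A (u j)) = \<mu> j" if "j < n" for j
    using qform_sorted_eigenbasis_vector[OF sp that] unfolding qform_herm_part[OF A] by simp
  then have "Re (expi \<theta> * w) = wnr_support n A c \<theta>"
    unfolding Re_w wnr_support_def using ev by simp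
  ultimately show ?thesis by blast
qed

text \<open>If p satisfied every defining inequality strictly, continuity of the support function and
  compactness of [0, 2 pi] would leave a uniform gap, putting a ball around p inside W(A;c).\<close>

lemma frontier_wnr_on_support_line:
  assumes A: "A \<in> carrier_mat n n" and p: "p \<in> frontier (wnr A c)"
  shows "\<exists>\<phi>. Re (expi \<phi> * p) = wnr_support n A c \<phi>"
proof (rule ccontr)
  assume "\<nexists>\<phi>. Re (expi \<phi> * p) = wnr_support n A c \<phi>"
  moreover have "p \<in> wnr A c"
    using p closed_wnr frontier_subset_closed by blast
  ultimately have gap: "0 < wnr_support n A c \<phi> - Re (expi \<phi> * p)" for \<phi>
    using wnr_le_support[OF A] by (metis diff_gt_0_iff_gt order_less_le)
  define g where "g \<phi> = wnr_support n A c \<phi> - Re (expi \<phi> * p)" for \<phi>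
  have "continuous_on {0..2*pi} g"
    unfolding g_def by (intro continuous_at_imp_continuous_on ballI isCont_diff isCont_wnr_support[OF A])
      (simp add: isCont_def, intro tendsto_intros)
  then obtain \<phi>0 where "\<forall>\<phi>\<in>{0..2*pi}. g \<phi>0 \<le> g \<phi>"
    using continuous_attains_inf[of "{0..2*pi}" g] by auto
  then have \<delta>: "g \<phi>0 \<le> g \<phi>" if "0 \<le> \<phi>" "\<phi> < 2 * pi" for \<phi> using that by auto
  have "ball p (g \<phi>0) \<subseteq> wnr A c"
  proof
    fix v assume "v \<in> ball p (g \<phi>0)"
    then have dv: "cmod (v - p) < g \<phi>0" by (simp add: dist_norm norm_minus_commute)
    show "v \<in> wnr A c"
    proof (rule wnr_memI[OF A])
      fix \<phi> :: real assume \<phi>: "0 \<le> \<phi>" "\<phi> < 2 * pi"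
      have "Re (expi \<phi> * (v - p)) \<le> cmod (v - p)"
        using complex_Re_le_cmod[of "expi \<phi> * (v - p)"] by (simp add: norm_mult)
      then show "Re (expi \<phi> * v) \<le> wnr_support n A c \<phi>"
        using dv \<delta>[OF \<phi>] unfolding g_def by (simp add: algebra_simps)
    qed
  qed
  then have "p \<in> interior (wnr A c)" using gap[of \<phi>0] unfolding g_def by (meson mem_interior)
  then show False using p unfolding frontier_def by simp
qed

lemma Re_derivative_eq_0_at_local_max:
  assumes "(\<gamma> has_vector_derivative d) (at 0)" "0 < e"
    and max: "\<And>t. \<bar>t\<bar> < e \<Longrightarrow> Re (b * \<gamma> t) \<le> Re (b * \<gamma> 0)"
  shows "Re (b * d) = 0"
proof -
  have "((\<lambda>t. Re (b * \<gamma> t)) has_vector_derivative Re (b * d)) (at 0)"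
    by (rule bounded_linear.has_vector_derivative[OF bounded_linear_Re
          has_vector_derivative_mult_right[OF assms(1)]])
  then have "DERIV (\<lambda>t. Re (b * \<gamma> t)) 0 :> Re (b * d)"
    by (simp add: has_real_derivative_iff_has_vector_derivative)
  then show ?thesis using DERIV_local_max assms(2) max by fastforce
qed

lemma unit_orthogonal_eq_or_neg:
  fixes a b d :: complex
  assumes a: "cmod a = 1" and b: "cmod b = 1" and d: "d \<noteq> 0"
    and "Re (a * d) = 0" and "Re (b * d) = 0"
  shows "b = a \<or> b = - a"
proof -
  define z where "z = b * cnj a"
  have b_eq: "b = z * a"
    unfolding z_def using a
    by (metis complex_norm_square mult.assoc mult.commute mult.right_neutral of_real_1 one_power2)
  define s where "s = Im (a * d)"
  have ad: "a * d = \<i> * of_real s" using \<open>Re (a * d) = 0\<close> unfolding s_def by (simp add: complex_eq_iff)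
  have "s \<noteq> 0" using a d ad by auto
  moreover have "Re (z * (\<i> * of_real s)) = 0"
    using \<open>Re (b * d) = 0\<close> unfolding b_eq ad[symmetric] by (simp add: mult.assoc)
  ultimately have "Im z = 0" by simp
  moreover have "cmod z = 1" unfolding z_def using a b by (simp add: norm_mult)
  ultimately have "z = 1 \<or> z = -1" by (auto simp: complex_eq_iff cmod_def abs_if split: if_splits)
  then show ?thesis using b_eq by auto
qed

lemma interior_subset_line_empty:
  assumes "cmod a = 1" and "S \<subseteq> {v. Re (a * v) = h}"
  shows "interior S = {}"
proof
  show "interior S \<subseteq> {}"
  proof
    fix v assume "v \<in> interior S"
    then obtain r where r: "r > 0" "ball v r \<subseteq> S" using mem_interior by blast
    define v' where "v' = v + of_real (r/2) * cnj a"
    have "a * cnj a = 1" using assms(1) by (metis complex_norm_square of_real_1 one_power2)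
    then have "a * v' = a * v + of_real (r/2)"
      unfolding v'_def by (metis distrib_left mult.left_commute mult.right_neutral)
    then have "Re (a * v') = Re (a * v) + r/2" by simp
    moreover have "v \<in> S" "v' \<in> S"
      using r assms(1) unfolding v'_def by (auto simp: dist_norm norm_mult subset_iff)
    then have "Re (a * v) = h" "Re (a * v') = h" using assms(2) by auto
    ultimately show "v \<in> {}" using r(1) by simp
  qed
qed simp

lemma wnr_support_at_smooth_boundary:
  assumes A: "A \<in> carrier_mat n n"
    and supp: "wnr A c \<subseteq> {v. Re (expi \<theta> * v) \<le> h}"
    and int: "interior (wnr A c) \<noteq> {}"
    and p: "Re (expi \<theta> * p) = h" "p \<in> frontier (wnr A c)" and smooth: "boundary_differentiable_at (wnr A c) p"
  shows "h = wnr_support n A c \<theta>"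
proof -
  obtain \<phi> where \<phi>: "Re (expi \<phi> * p) = wnr_support n A c \<phi>"
    using frontier_wnr_on_support_line[OF A p(2)] by blast
  obtain \<gamma> :: "real \<Rightarrow> complex" and e U d where \<gamma>: "0 < e" "\<gamma> ` {-e<..<e} = frontier (wnr A c) \<inter> U"
    "\<gamma> 0 = p" "(\<gamma> has_vector_derivative d) (at 0)" "d \<noteq> 0"
    using smooth unfolding boundary_differentiable_at_def by blast
  have \<gamma>_wnr: "\<gamma> t \<in> wnr A c" if "\<bar>t\<bar> < e" for t
    using that \<gamma>(2) closed_wnr frontier_subset_closed by fastforce
  have "Re (expi \<phi> * d) = 0"
    by (rule Re_derivative_eq_0_at_local_max[OF \<gamma>(4,1)]) (use \<gamma>_wnr wnr_le_support[OF A] \<phi> \<gamma>(3) in metis)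
  moreover have "Re (expi \<theta> * d) = 0"
    by (rule Re_derivative_eq_0_at_local_max[OF \<gamma>(4,1)]) (use \<gamma>_wnr supp p(1) \<gamma>(3) in fastforce)
  ultimately consider "expi \<phi> = expi \<theta>" | "expi \<phi> = - expi \<theta>"
    using unit_orthogonal_eq_or_neg[OF norm_expi norm_expi \<gamma>(5)] by blast
  then show ?thesis
  proof cases
    case 1
    then show ?thesis using \<phi> p(1) herm_part_cong[OF 1] unfolding wnr_support_def by simp
  next
    case 2
    have "Re (expi \<theta> * v) = h" if "v \<in> wnr A c" for v
      using wnr_le_support[OF A that, of \<phi>] supp that \<phi> p(1) 2 by force
    then have "interior (wnr A c) = {}" by (intro interior_subset_line_empty[OF norm_expi]) auto
    then show ?thesis using int by simp
  qed
qed

theorem lemma3: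
  fixes A :: "complex mat" and c :: "nat \<Rightarrow> real" and n :: nat and \<theta> h :: real
  assumes A: "A \<in> carrier_mat n n"
    and nonempty: "wnr A c \<noteq> {}"
    and supp: "wnr A c \<subseteq> {v. Re (exp (\<i> * complex_of_real \<theta>) * v) \<le> h}"
    and touch: "{v. Re (exp (\<i> * complex_of_real \<theta>) * v) = h} \<inter> wnr A c \<noteq> {}"
    and cases: "(interior (wnr A c) \<noteq> {} \<and>
                 (\<exists>p \<in> {v. Re (exp (\<i> * complex_of_real \<theta>) * v) = h} \<inter> frontier (wnr A c).
                    boundary_differentiable_at (wnr A c) p))
              \<or> (\<forall>i j. i \<le> j \<and> j < n \<longrightarrow> c j \<le> c i)"
  shows "h = (\<Sum>j<n. c j * herm_eigs (herm_part \<theta> A) ! j)"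
proof -
  have "h \<le> wnr_support n A c \<theta>"
    using touch wnr_le_support[OF A] by fastforce
  moreover have "wnr_support n A c \<theta> \<le> h" if "\<forall>i j. i \<le> j \<and> j < n \<longrightarrow> c j \<le> c i"
    using wnr_support_attained[OF A that, where \<theta>=\<theta>] supp by fastforce
  ultimately show ?thesis
    using cases wnr_support_at_smooth_boundary[OF A supp] unfolding wnr_support_def by force
qed

end
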